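(* Let $h$ be a transcendental entire function with $h(1)\neq 0$ and $h(-1)\neq 0$. For $a\in\mathbb{C}$ put $H_a(z):=\cos z\cdot h(\sin z)+a\sin z$. Then there exists an at most countable set $E\subset\mathbb{C}$ such that for every $a\in\mathbb{C}\setminus E$ and every $c\in\mathbb{C}$, any two solutions $u,v$ of the simultaneous equations $H_a(z)=c,\ H_a'(z)=0$ satisfy $\cos u=\cos v$ and $\sin u=\sin v$. *)

theory Defs
  imports "HOL-Analysis.Analysis" "HOL-Computational_Algebra.Polynomial"
begin

definition transcendental_entire :: "(complex \<Rightarrow> complex) \<Rightarrow> bool" where
  "transcendental_entire h \<longleftrightarrow> h holomorphic_on UNIV \<and> \<not> (\<exists>p. \<forall>z. h z = poly p z)"

definition Hfun :: "(complex \<Rightarrow> complex) \<Rightarrow> complex \<Rightarrow> complex \<Rightarrow> complex" where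
  "Hfun h a z = cos z * h (sin z) + a * sin z"

end

theory Submission
  imports Defs "HOL-Complex_Analysis.Complex_Analysis"
begin

(* At a critical point z of H_a we have H_a'(z) = F(sin z) + a cos z = 0 with
   F(w) = (1 - w^2) h'(w) - w h(w). Since F(1) = -h(1) and F(-1) = h(-1) do not vanish,
   cos z \<noteq> 0, so a = A(z) := -F(sin z) / cos z, and the critical value is C(z) := H_A(z)(z)
   (F, A, C are Hfun_deriv_core, crit_param, crit_value below), with C' = sin * A'.
   The pairs (u, v) with A u = A v, C u = C v, A' u \<noteq> 0 \<noteq> A' v and sin u \<noteq> sin v form a
   discrete, hence countable, set. Let E consist of 0, the values of A at the countably many
   zeros of A', and the values A u for these pairs. For a \<notin> E, two critical points u, v of H_a
   with the same critical value have sin u = sin v, and a cos u = -F(sin u) = a cos v then gives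
   cos u = cos v. *)

lemma discrete_imp_countable:
  fixes S :: "'a::second_countable_topology set"
  assumes "discrete S"
  shows "countable S"
proof -
  obtain B :: "'a set set" where B: "countable B" "topological_basis B"
    using ex_countable_basis by blast
  have "\<forall>x\<in>S. \<exists>b. b \<in> B \<and> b \<inter> S = {x}"
  proof
    fix x assume x: "x \<in> S"
    obtain U where U: "open U" "U \<inter> S = {x}"
      using discreteD[OF assms x] by (auto simp: isolated_in_def)
    moreover have "x \<in> U"
      using U(2) by blast
    ultimately obtain b where b: "b \<in> B" "x \<in> b" "b \<subseteq> U"
      using topological_basisE[OF B(2)] by metis
    then have "b \<inter> S = {x}"
      using U(2) x by blast
    with b(1) show "\<exists>b. b \<in> B \<and> b \<inter> S = {x}" by blast
  qed
  from bchoice[OF this] obtain f where f: "\<forall>x\<in>S. f x \<in> B \<and> f x \<inter> S = {x}" ..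
  have "inj_on f S"
  proof (rule inj_onI)
    fix x y assume "x \<in> S" "y \<in> S" "f x = f y"
    then have "{x} = {y}"
      using f by metis
    then show "x = y" by simp
  qed
  moreover have "f ` S \<subseteq> B"
    using f by blast
  ultimately show ?thesis
    using B(1) countable_image_inj_on countable_subset by blast
qed

lemma open_imp_fsigma:
  fixes S :: "'a::euclidean_space set"
  assumes "open S"
  shows "fsigma S"
proof -
  obtain K :: "nat \<Rightarrow> 'a set" where "\<And>n. compact (K n)" "\<Union>(range K) = S"
    using open_Union_compact_subsets[OF assms] by metis
  then show ?thesis
    by (auto simp: fsigma_Union_compact intro!: exI[of _ K])
qed

lemma holomorphic_local_inverse:
  assumes holf: "f holomorphic_on S" and "open S" "z \<in> S" "deriv f z \<noteq> 0"
  obtains B g where "open B" "z \<in> B" "B \<subseteq> S" "open (f ` B)"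
    "g holomorphic_on f ` B" "\<And>w. w \<in> B \<Longrightarrow> g (f w) = w"
    "\<And>w. w \<in> B \<Longrightarrow> (g has_field_derivative inverse (deriv f w)) (at (f w))"
proof -
  obtain r where r: "r > 0" "ball z r \<subseteq> S" "inj_on f (ball z r)"
    using has_complex_derivative_locally_injective[OF holf \<open>z \<in> S\<close> \<open>open S\<close>] assms(4)
    by blast
  have holB: "f holomorphic_on ball z r"
    using holf r(2) by (rule holomorphic_on_subset)
  obtain g where g: "g holomorphic_on f ` ball z r"
    "\<And>w. w \<in> ball z r \<Longrightarrow> deriv f w * deriv g (f w) = 1"
    "\<And>w. w \<in> ball z r \<Longrightarrow> g (f w) = w"
    using holomorphic_has_inverse[OF holB open_ball r(3)] by blast
  have open_image: "open (f ` ball z r)"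
    using open_mapping_thm3[OF holB open_ball r(3)] .
  have "(g has_field_derivative inverse (deriv f w)) (at (f w))" if "w \<in> ball z r" for w
  proof -
    have "(g has_field_derivative deriv g (f w)) (at (f w))"
      using g(1) open_image that
      by (meson DERIV_deriv_iff_field_differentiable holomorphic_on_imp_differentiable_at imageI)
    moreover have "deriv g (f w) = inverse (deriv f w)"
      using g(2)[OF that] by (metis inverse_unique)
    ultimately show ?thesis by simp
  qed
  with that[of "ball z r" g] r g open_image show ?thesis
    by auto
qed

lemma holomorphic_coincidence_isolated:
  assumes holf: "f holomorphic_on W" and holg: "g holomorphic_on W" and "open W" "a \<in> W"
    and "f a = g a" and f': "(f has_field_derivative f') (at a)"
    and g': "(g has_field_derivative g') (at a)" and "f' \<noteq> g'"
  obtains e where "e > 0" "\<And>b. b \<in> ball a e \<Longrightarrow> f b = g b \<Longrightarrow> b = a"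
proof -
  define D where "D b = f b - g b" for b
  have "D holomorphic_on W"
    unfolding D_def[abs_def] using holf holg by (rule holomorphic_on_diff)
  moreover have "(D has_field_derivative f' - g') (at a)"
    unfolding D_def[abs_def] using f' g' by (rule DERIV_diff)
  then have "deriv D a \<noteq> 0"
    using \<open>f' \<noteq> g'\<close> DERIV_imp_deriv by fastforce
  ultimately obtain e where "e > 0" "inj_on D (ball a e)"
    using has_complex_derivative_locally_injective[OF _ \<open>a \<in> W\<close> \<open>open W\<close>] by blast
  moreover have "b = a" if "b \<in> ball a e" "f b = g b" for b
    using inj_onD[OF \<open>inj_on D (ball a e)\<close>, of b a] that \<open>e > 0\<close> \<open>f a = g a\<close>
    by (simp add: D_def)
  ultimately show ?thesis
    using that by blast
qed

lemma holomorphic_locally_function_of: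
  fixes A C S :: "complex \<Rightarrow> complex"
  assumes "open \<Omega>" and holA: "A holomorphic_on \<Omega>" and holC: "C holomorphic_on \<Omega>"
    and deriv_C: "\<And>z. z \<in> \<Omega> \<Longrightarrow> deriv C z = S z * deriv A z"
    and "u \<in> \<Omega>" "deriv A u \<noteq> 0"
  obtains B \<Phi> where "open B" "u \<in> B" "B \<subseteq> \<Omega>" "open (A ` B)" "inj_on A B"
    "\<Phi> holomorphic_on A ` B" "\<And>w. w \<in> B \<Longrightarrow> C w = \<Phi> (A w)"
    "(\<Phi> has_field_derivative S u) (at (A u))"
proof -
  obtain B g where B: "open B" "u \<in> B" "B \<subseteq> \<Omega>" "open (A ` B)"
    and g: "g holomorphic_on A ` B" "\<And>w. w \<in> B \<Longrightarrow> g (A w) = w"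
      "\<And>w. w \<in> B \<Longrightarrow> (g has_field_derivative inverse (deriv A w)) (at (A w))"
    using holomorphic_local_inverse[OF holA \<open>open \<Omega>\<close> \<open>u \<in> \<Omega>\<close> \<open>deriv A u \<noteq> 0\<close>] by blast
  have "inj_on A B"
    using g(2) by (metis inj_onI)
  moreover have "(C \<circ> g) holomorphic_on A ` B"
    using g(2) B(3) by (intro holomorphic_on_compose_gen[OF g(1) holC]) auto
  moreover have "(C has_field_derivative S u * deriv A u) (at (g (A u)))"
    using holomorphic_on_imp_differentiable_at[OF holC \<open>open \<Omega>\<close> \<open>u \<in> \<Omega>\<close>]
      deriv_C[OF \<open>u \<in> \<Omega>\<close>] g(2)[OF B(2)]
    by (metis field_differentiable_derivI)
  from DERIV_chain[OF this g(3)[OF B(2)]]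
  have "((C \<circ> g) has_field_derivative S u) (at (A u))"
    using \<open>deriv A u \<noteq> 0\<close> by (simp add: field_simps)
  ultimately show ?thesis
    using that[of B "C \<circ> g"] B g(2) by simp
qed

definition common_level_pairs ::
  "complex set \<Rightarrow> (complex \<Rightarrow> complex) \<Rightarrow> (complex \<Rightarrow> complex) \<Rightarrow> (complex \<Rightarrow> complex)
    \<Rightarrow> (complex \<times> complex) set" where
  "common_level_pairs \<Omega> A C S =
     {(u, v). u \<in> \<Omega> \<and> v \<in> \<Omega> \<and> A u = A v \<and> C u = C v \<and>
              deriv A u \<noteq> 0 \<and> deriv A v \<noteq> 0 \<and> S u \<noteq> S v}"

text \<open>Near such a pair write \<open>C = \<Phi>\<^sub>1 \<circ> A\<close> near \<open>u\<close> and \<open>C = \<Phi>\<^sub>2 \<circ> A\<close> near \<open>v\<close>.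
  Nearby pairs then lie over points where \<open>\<Phi>\<^sub>1 = \<Phi>\<^sub>2\<close>; as \<open>\<Phi>\<^sub>1' (A u) = S u \<noteq> S v = \<Phi>\<^sub>2' (A u)\<close>,
  the only such point near \<open>A u\<close> is \<open>A u\<close> itself, and \<open>A\<close> is injective near \<open>u\<close> and \<open>v\<close>.\<close>

lemma discrete_common_level_pairs:
  fixes A C S :: "complex \<Rightarrow> complex"
  assumes "open \<Omega>" and holA: "A holomorphic_on \<Omega>" and holC: "C holomorphic_on \<Omega>"
    and deriv_C: "\<And>z. z \<in> \<Omega> \<Longrightarrow> deriv C z = S z * deriv A z"
  shows "discrete (common_level_pairs \<Omega> A C S)"
proof (rule discreteI, clarify)
  let ?P = "common_level_pairs \<Omega> A C S"
  fix u v assume "(u, v) \<in> ?P"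
  then have u: "u \<in> \<Omega>" "deriv A u \<noteq> 0" and v: "v \<in> \<Omega>" "deriv A v \<noteq> 0"
    and same_A: "A u = A v" and same_C: "C u = C v" and "S u \<noteq> S v"
    by (auto simp: common_level_pairs_def)
  obtain B1 \<Phi>1 where B1: "open B1" "u \<in> B1" "B1 \<subseteq> \<Omega>" "open (A ` B1)" "inj_on A B1"
    and \<Phi>1: "\<Phi>1 holomorphic_on A ` B1" "\<And>w. w \<in> B1 \<Longrightarrow> C w = \<Phi>1 (A w)"
      "(\<Phi>1 has_field_derivative S u) (at (A u))"
    using holomorphic_locally_function_of[OF assms u] by blast
  obtain B2 \<Phi>2 where B2: "open B2" "v \<in> B2" "B2 \<subseteq> \<Omega>" "open (A ` B2)" "inj_on A B2"
    and \<Phi>2: "\<Phi>2 holomorphic_on A ` B2" "\<And>w. w \<in> B2 \<Longrightarrow> C w = \<Phi>2 (A w)"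
      "(\<Phi>2 has_field_derivative S v) (at (A v))"
    using holomorphic_locally_function_of[OF assms v] by blast
  have "open (A ` B1 \<inter> A ` B2)"
    using B1(4) B2(4) by auto
  moreover have "A u \<in> A ` B1 \<inter> A ` B2"
    using B1(2) B2(2) same_A by (metis IntI imageI)
  moreover have "\<Phi>1 (A u) = \<Phi>2 (A u)"
    using \<Phi>1(2)[OF B1(2)] \<Phi>2(2)[OF B2(2)] same_A same_C by simp
  ultimately obtain e where e: "e > 0" "\<And>b. b \<in> ball (A u) e \<Longrightarrow> \<Phi>1 b = \<Phi>2 b \<Longrightarrow> b = A u"
    using holomorphic_coincidence_isolated[OF holomorphic_on_subset[OF \<Phi>1(1) inf_le1]
        holomorphic_on_subset[OF \<Phi>2(1) inf_le2] _ _ _ \<Phi>1(3) \<Phi>2(3)[folded same_A] \<open>S u \<noteq> S v\<close>]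
    by blast
  define T where "T = (B1 \<inter> A -` ball (A u) e) \<times> B2"
  have "continuous_on B1 A"
    using holA B1(3) holomorphic_on_imp_continuous_on holomorphic_on_subset by blast
  then have "open T"
    unfolding T_def using B1(1) B2(1) by (intro open_Times continuous_open_preimage) auto
  moreover have "T \<inter> ?P = {(u, v)}"
  proof (intro equalityI subsetI)
    fix p assume "p \<in> T \<inter> ?P"
    then obtain u' v' where p: "p = (u', v')" and "u' \<in> B1" "v' \<in> B2" "A u' \<in> ball (A u) e"
      and "A u' = A v'" "C u' = C v'"
      by (auto simp: T_def common_level_pairs_def)
    have "\<Phi>1 (A u') = \<Phi>2 (A u')"
      using \<Phi>1(2)[OF \<open>u' \<in> B1\<close>] \<Phi>2(2)[OF \<open>v' \<in> B2\<close>] \<open>A u' = A v'\<close> \<open>C u' = C v'\<close> by simp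
    then have "A u' = A u"
      using e(2) \<open>A u' \<in> ball (A u) e\<close> by blast
    then have "u' = u" "A v' = A v"
      using inj_onD[OF B1(5)] \<open>u' \<in> B1\<close> B1(2) \<open>A u' = A v'\<close> same_A by auto
    then have "v' = v"
      using inj_onD[OF B2(5)] \<open>v' \<in> B2\<close> B2(2) by blast
    then show "p \<in> {(u, v)}"
      using \<open>u' = u\<close> p by simp
  next
    fix p assume "p \<in> {(u, v)}"
    then show "p \<in> T \<inter> ?P"
      using \<open>(u, v) \<in> ?P\<close> B1(2) B2(2) e(1) by (simp add: T_def)
  qed
  ultimately show "(u, v) isolated_in ?P"
    using \<open>(u, v) \<in> ?P\<close> by (auto simp: isolated_in_def)
qed

definition Hfun_deriv_core :: "(complex \<Rightarrow> complex) \<Rightarrow> complex \<Rightarrow> complex" where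
  "Hfun_deriv_core h w = (1 - w\<^sup>2) * deriv h w - w * h w"

definition crit_param :: "(complex \<Rightarrow> complex) \<Rightarrow> complex \<Rightarrow> complex" where
  "crit_param h z = - Hfun_deriv_core h (sin z) / cos z"

definition crit_value :: "(complex \<Rightarrow> complex) \<Rightarrow> complex \<Rightarrow> complex" where
  "crit_value h z = Hfun h (crit_param h z) z"

lemma holomorphic_Hfun_deriv_core:
  "h holomorphic_on UNIV \<Longrightarrow> Hfun_deriv_core h holomorphic_on UNIV"
  unfolding Hfun_deriv_core_def[abs_def] by (intro holomorphic_intros holomorphic_deriv) auto

lemma Hfun_has_field_derivative:
  assumes "h holomorphic_on UNIV"
  shows "(Hfun h a has_field_derivative Hfun_deriv_core h (sin z) + a * cos z) (at z)"
proof -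
  have Dh: "(h has_field_derivative deriv h w) (at w)" for w
    using holomorphic_on_imp_differentiable_at[OF assms open_UNIV UNIV_I]
    by (rule field_differentiable_derivI)
  have "(Hfun h a has_field_derivative
      - sin z * h (sin z) + cos z * (deriv h (sin z) * cos z) + a * cos z) (at z)"
    unfolding Hfun_def[abs_def] by (auto intro!: derivative_eq_intros DERIV_chain2[OF Dh])
  then show ?thesis
  proof (rule DERIV_cong)
    show "- sin z * h (sin z) + cos z * (deriv h (sin z) * cos z) + a * cos z
        = Hfun_deriv_core h (sin z) + a * cos z"
      using cos_squared_eq[of z] unfolding Hfun_deriv_core_def by algebra
  qed
qed

lemma deriv_Hfun:
  "h holomorphic_on UNIV \<Longrightarrow> deriv (Hfun h a) z = Hfun_deriv_core h (sin z) + a * cos z"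
  using Hfun_has_field_derivative DERIV_imp_deriv by blast

lemma Hfun_critical_point:
  assumes "h holomorphic_on UNIV" "h 1 \<noteq> 0" "h (-1) \<noteq> 0" and "deriv (Hfun h a) z = 0"
  shows "cos z \<noteq> 0" and "a = crit_param h z"
proof -
  have crit: "Hfun_deriv_core h (sin z) + a * cos z = 0"
    using assms(1,4) by (simp add: deriv_Hfun)
  show "cos z \<noteq> 0"
  proof
    assume "cos z = 0"
    then have "sin z = 1 \<or> sin z = -1"
      using sin_squared_eq[of z] by (simp add: power2_eq_1_iff)
    then show False
      using crit \<open>cos z = 0\<close> assms(2,3) by (auto simp: Hfun_deriv_core_def)
  qed
  then show "a = crit_param h z"
    using crit by (simp add: crit_param_def field_simps add_eq_0_iff)
qed

lemma countable_cos_zeros: "countable {z::complex. cos z = 0}"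
proof -
  have "{z::complex. cos z = 0} = range (\<lambda>n::int. complex_of_real (n * pi) + of_real pi / 2)"
    by (auto simp: cos_eq_0)
  then show ?thesis
    by simp
qed

lemma
  shows open_cos_nonzero: "open {z::complex. cos z \<noteq> 0}"
    and connected_cos_nonzero: "connected {z::complex. cos z \<noteq> 0}"
    and uncountable_cos_nonzero: "uncountable {z::complex. cos z \<noteq> 0}"
proof -
  have eq: "{z::complex. cos z \<noteq> 0} = UNIV - {z. cos z = 0}"
    by auto
  show "open {z::complex. cos z \<noteq> 0}"
    by (intro open_Collect_neq continuous_intros)
  show "connected {z::complex. cos z \<noteq> 0}"
    unfolding eq
    by (rule connected_open_diff_countable[OF _ open_UNIV connected_UNIV countable_cos_zeros]) simp
  show "uncountable {z::complex. cos z \<noteq> 0}"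
    unfolding eq by (rule uncountable_minus_countable[OF uncountable_UNIV_complex countable_cos_zeros])
qed

lemma holomorphic_crit_param:
  "h holomorphic_on UNIV \<Longrightarrow> crit_param h holomorphic_on {z. cos z \<noteq> 0}"
  unfolding crit_param_def[abs_def]
  by (intro holomorphic_intros holomorphic_on_compose_gen[OF _ holomorphic_Hfun_deriv_core,
        unfolded o_def]) auto

lemma holomorphic_crit_value:
  assumes "h holomorphic_on UNIV"
  shows "crit_value h holomorphic_on {z. cos z \<noteq> 0}"
  unfolding crit_value_def[abs_def] Hfun_def
  by (intro holomorphic_intros holomorphic_crit_param[OF assms]
        holomorphic_on_compose_gen[OF _ assms, unfolded o_def]) auto

text \<open>The envelope principle: \<open>\<partial>\<^sub>z H\<^sub>a\<close> vanishes at \<open>a = crit_param h z\<close>, and \<open>\<partial>\<^sub>a H\<^sub>a = sin\<close>.\<close>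

lemma deriv_crit_value:
  assumes "h holomorphic_on UNIV" and "cos z \<noteq> 0"
  shows "deriv (crit_value h) z = sin z * deriv (crit_param h) z"
proof -
  let ?A = "crit_param h"
  have "?A field_differentiable at z"
    using holomorphic_crit_param[OF assms(1)] open_cos_nonzero assms(2)
    by (auto intro: holomorphic_on_imp_differentiable_at)
  then have "((\<lambda>w. (?A w - ?A z) * sin w) has_field_derivative deriv ?A z * sin z) (at z)"
    by (auto intro!: derivative_eq_intros field_differentiable_derivI)
  moreover have "(Hfun h (?A z) has_field_derivative 0) (at z)"
    using Hfun_has_field_derivative[OF assms(1), of "?A z" z] assms(2)
    by (simp add: crit_param_def)
  ultimately have "((\<lambda>w. Hfun h (?A z) w + (?A w - ?A z) * sin w)
      has_field_derivative sin z * deriv ?A z) (at z)"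
    by (auto intro: derivative_eq_intros)
  moreover have "crit_value h = (\<lambda>w. Hfun h (?A z) w + (?A w - ?A z) * sin w)"
    by (auto simp: fun_eq_iff crit_value_def Hfun_def algebra_simps)
  ultimately show ?thesis
    by (simp add: DERIV_imp_deriv)
qed

lemma crit_param_not_constant:
  assumes "h holomorphic_on UNIV" and "h 1 \<noteq> 0"
  shows "\<not> crit_param h constant_on {z. cos z \<noteq> 0}"
proof
  assume "crit_param h constant_on {z. cos z \<noteq> 0}"
  then obtain c where c: "\<And>z. cos z \<noteq> 0 \<Longrightarrow> crit_param h z = c"
    by (auto simp: constant_on_def)
  define G where "G z = Hfun_deriv_core h (sin z) + c * cos z" for z
  have "G holomorphic_on UNIV"
    unfolding G_def[abs_def]
    by (intro holomorphic_intros holomorphic_on_compose_gen[OF _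
          holomorphic_Hfun_deriv_core[OF assms(1)], unfolded o_def]) auto
  moreover have "G z = 0" if "cos z \<noteq> 0" for z
  proof -
    have "- Hfun_deriv_core h (sin z) = c * cos z"
      using c[OF that] that by (simp add: crit_param_def field_simps)
    then show ?thesis
      unfolding G_def by algebra
  qed
  then have "{z. cos z \<noteq> 0} \<subseteq> {z. G z = (\<lambda>_. 0) z}"
    by auto
  then have "uncountable {z. G z = (\<lambda>_. 0) z}"
    using uncountable_cos_nonzero countable_subset by blast
  ultimately have "G = (\<lambda>_. 0)"
    by (intro holomorphic_countable_equal_UNIV) auto
  then have "G (of_real (pi / 2)) = 0"
    by simp
  then show False
    using assms(2) by (simp add: G_def Hfun_deriv_core_def sin_of_real cos_of_real)
qed

lemma countable_crit_param_deriv_zeros: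
  assumes "h holomorphic_on UNIV" and "h 1 \<noteq> 0"
  shows "countable {z. cos z \<noteq> 0 \<and> deriv (crit_param h) z = 0}"
proof (cases "deriv (crit_param h) constant_on {z. cos z \<noteq> 0}")
  case True
  then obtain k where k: "\<And>z. cos z \<noteq> 0 \<Longrightarrow> deriv (crit_param h) z = k"
    by (auto simp: constant_on_def)
  have holA: "crit_param h holomorphic_on {z. cos z \<noteq> 0}"
    using holomorphic_crit_param[OF assms(1)] .
  have "k \<noteq> 0"
  proof
    assume "k = 0"
    have "(crit_param h has_field_derivative 0) (at z)" if "cos z \<noteq> 0" for z
      using k[OF that] \<open>k = 0\<close> that
        holomorphic_on_imp_differentiable_at[OF holA open_cos_nonzero, of z]
      by (auto dest: field_differentiable_derivI)
    then have "crit_param h constant_on {z. cos z \<noteq> 0}"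
      using connected_cos_nonzero open_cos_nonzero holomorphic_on_imp_continuous_on[OF holA]
      by (intro DERIV_zero_connected_constant_on[where K = "{}"]) auto
    then show False
      using crit_param_not_constant[OF assms] by contradiction
  qed
  then have "{z. cos z \<noteq> 0 \<and> deriv (crit_param h) z = 0} = {}"
    using k by auto
  then show ?thesis
    by (metis countable_empty)
next
  case False
  have "countable {z \<in> {z. cos z \<noteq> 0}. deriv (crit_param h) z = 0}"
    using holomorphic_countable_zeros[OF
        holomorphic_deriv[OF holomorphic_crit_param[OF assms(1)] open_cos_nonzero]
        open_cos_nonzero connected_cos_nonzero open_imp_fsigma[OF open_cos_nonzero] False] .
  then show ?thesis
    by (simp only: mem_Collect_eq)
qed

lemma Hfun_critical_pair_cos_sin_eq:
  assumes "h holomorphic_on UNIV" "h 1 \<noteq> 0" "h (-1) \<noteq> 0" and "a \<noteq> 0"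
    and crit: "deriv (Hfun h a) u = 0" "deriv (Hfun h a) v = 0" "Hfun h a u = Hfun h a v"
    and "deriv (crit_param h) u \<noteq> 0" "deriv (crit_param h) v \<noteq> 0"
    and "(u, v) \<notin> common_level_pairs {z. cos z \<noteq> 0} (crit_param h) (crit_value h) sin"
  shows "cos u = cos v \<and> sin u = sin v"
proof -
  have u: "cos u \<noteq> 0" "a = crit_param h u" and v: "cos v \<noteq> 0" "a = crit_param h v"
    using Hfun_critical_point[OF assms(1-3)] crit(1,2) by blast+
  have "crit_value h u = crit_value h v"
    using crit(3) u v by (simp add: crit_value_def)
  then have "sin u = sin v"
    using assms(8-10) u v by (auto simp: common_level_pairs_def)
  moreover have "cos u = cos v"
    using u v \<open>a \<noteq> 0\<close> \<open>sin u = sin v\<close> by (auto simp: crit_param_def field_simps)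
  ultimately show ?thesis
    by simp
qed

theorem lemma2p2:
  fixes h :: "complex \<Rightarrow> complex"
  assumes "transcendental_entire h" and "h 1 \<noteq> 0" and "h (-1) \<noteq> 0"
  shows "\<exists>E :: complex set. countable E \<and>
           (\<forall>a. a \<notin> E \<longrightarrow>
              (\<forall>c u v. Hfun h a u = c \<and> deriv (Hfun h a) u = 0 \<and>
                       Hfun h a v = c \<and> deriv (Hfun h a) v = 0
                       \<longrightarrow> cos u = cos v \<and> sin u = sin v))"
proof -
  have holh: "h holomorphic_on UNIV"
    using assms(1) by (simp add: transcendental_entire_def)
  define Z where "Z = {z. cos z \<noteq> 0 \<and> deriv (crit_param h) z = 0}"
  define P where "P = common_level_pairs {z. cos z \<noteq> 0} (crit_param h) (crit_value h) sin"
  define E where "E = insert 0 (crit_param h ` (Z \<union> fst ` P))"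
  have "countable P"
    unfolding P_def
    by (intro discrete_imp_countable discrete_common_level_pairs open_cos_nonzero
        holomorphic_crit_param holomorphic_crit_value deriv_crit_value holh) auto
  then have "countable E"
    using countable_crit_param_deriv_zeros[OF holh assms(2)] by (simp add: E_def Z_def)
  moreover have "cos u = cos v \<and> sin u = sin v"
    if "a \<notin> E" and crit: "deriv (Hfun h a) u = 0" "deriv (Hfun h a) v = 0"
      "Hfun h a u = Hfun h a v" for a u v
  proof -
    have u: "cos u \<noteq> 0" "a = crit_param h u" and v: "cos v \<noteq> 0" "a = crit_param h v"
      using Hfun_critical_point[OF holh assms(2,3)] crit(1,2) by blast+
    have "u \<notin> Z \<union> fst ` P" "v \<notin> Z" "a \<noteq> 0"
      using \<open>a \<notin> E\<close> u(2) v(2) unfolding E_def by blast+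
    then have "deriv (crit_param h) u \<noteq> 0" "deriv (crit_param h) v \<noteq> 0" "(u, v) \<notin> P"
      using u(1) v(1) by (auto simp: Z_def image_iff)
    then show ?thesis
      using Hfun_critical_pair_cos_sin_eq[OF holh assms(2,3) \<open>a \<noteq> 0\<close> crit] by (simp add: P_def)
  qed
  ultimately show ?thesis
    by metis
qed

end
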